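(* Let $p=p(n)$ and suppose that $d=p(n-1)\ge \log^3 n$. Let $G=(V,E)$ be an $n$-vertex graph such that for some positive constant $c$: (i) for every $S\subseteq V$ with $s=|S|$ and every $r\in\mathbb N$, $\big|\bigcup_{v\in S}N(v,r)\big|\ge c\min\{sd^r,n\}$, and if $sd^r<n/\log n$ then $\big|\bigcup_{v\in S}N(v,r)\big|=(1+o(1))sd^r$; (ii) for every $v\in V$ and $r\in\mathbb N$ with $\sqrt n<d^{r+1}\le\sqrt n\log n$ there is a family $\{W(u)\subseteq S(u,r+1):u\in S(v,r)\}$ of pairwise disjoint sets with $|W(u)|=(1+o(1))d^{r+1}$ for each $u$. Let $X\subseteq V$ be any set of at most $2\sqrt n$ vertices and let $r=r(n)\in\mathbb N$ be such that $d^r\ge \sqrt n\log n$. Let $Y\subseteq V$ be a random set obtained by including each vertex of $V$ independently with probability $C/\sqrt n$, where $C\in\mathbb R$. Then, for a sufficiently large constant $C$, with probability $1-o(n^{-2})$ (over the choice of $Y$) it is possible to assign all the vertices of $X$ to distinct vertices of $Y$ such that each $u\in X$ is assigned to a vertex of $Y$ within distance $r$ of $u$.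
   Context: $\log$ is the natural logarithm. For a vertex $v$ and $r\ge0$, $S(v,r)$ is the set of vertices at distance exactly $r$ from $v$ and $N(v,r)$ is the set of vertices at distance at most $r$ from $v$. Asymptotic notation refers to $n\to\infty$ (the graph depends on $n$), with the $o(\cdot)$ terms uniform in the quantified parameters. *)

theory Defs
  imports Complex_Main "HOL-Library.Landau_Symbols"
begin

definition graph_on :: "nat \<Rightarrow> (nat \<Rightarrow> nat \<Rightarrow> bool) \<Rightarrow> bool" where
  "graph_on n E \<longleftrightarrow> (\<forall>u v. E u v \<longrightarrow> u < n \<and> v < n \<and> u \<noteq> v \<and> E v u)"

definition ball_set :: "nat \<Rightarrow> (nat \<Rightarrow> nat \<Rightarrow> bool) \<Rightarrow> nat \<Rightarrow> nat \<Rightarrow> nat set" where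
  "ball_set n E v r = {w. w < n \<and> (\<exists>k\<le>r. (E ^^ k) v w)}"

definition sphere_set :: "nat \<Rightarrow> (nat \<Rightarrow> nat \<Rightarrow> bool) \<Rightarrow> nat \<Rightarrow> nat \<Rightarrow> nat set" where
  "sphere_set n E v r = {w. w < n \<and> (E ^^ r) v w \<and> (\<forall>k<r. \<not> (E ^^ k) v w)}"

definition rand_subset_prob :: "nat set \<Rightarrow> real \<Rightarrow> (nat set \<Rightarrow> bool) \<Rightarrow> real" where
  "rand_subset_prob V q P =
     (\<Sum>Y\<in>Pow V. if P Y then q ^ card Y * (1 - q) ^ (card V - card Y) else 0)"

definition assignable :: "nat \<Rightarrow> (nat \<Rightarrow> nat \<Rightarrow> bool) \<Rightarrow> nat \<Rightarrow> nat set \<Rightarrow> nat set \<Rightarrow> bool" where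
  "assignable n E r X Y \<longleftrightarrow>
     (\<exists>f. inj_on f X \<and> (\<forall>u\<in>X. f u \<in> Y \<and> f u \<in> ball_set n E u r))"

end

theory Submission
  imports Defs "HOL-Real_Asymp.Real_Asymp"
begin

text \<open>If X cannot be matched into Y within distance r then, by Hall's theorem, some nonempty
  S \<subseteq> X sees fewer than |S| vertices of Y in its r-neighbourhood N(S). Expansion gives
  |N(S)| \<ge> c min(|S| d^r, n) \<ge> c min(|S| \<surd>n log n, n), so Y \<inter> N(S) has mean at least
  cC min(|S| log n, \<surd>n), and the elementary lower-tail bound e^s e^{-q|A|/2} for
  P(|Y \<inter> A| < s) shows that, once cC \<ge> 12, a fixed S fails with probability at most
  (e/n^6)^|S| + e^{|S| - 6\<surd>n}. Summing over the subsets of X, where |X| \<le> 2\<surd>n, gives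
  exp(2e\<surd>n/n^6) - 1 + e^{-2\<surd>n} = o(n^{-2}). Only the lower expansion bound of (i) is
  needed.\<close>

lemma injective_choice_glue:
  assumes "inj_on g S" "\<forall>u\<in>S. g u \<in> A u \<inter> U"
    and "inj_on h (X - S)" "\<forall>u\<in>X - S. h u \<in> A u - U"
  shows "\<exists>f. inj_on f X \<and> (\<forall>u\<in>X. f u \<in> A u)"
proof (intro exI conjI)
  let ?f = "\<lambda>u. if u \<in> S then g u else h u"
  show "inj_on ?f X"
    using assms unfolding inj_on_def by (metis Diff_iff IntD2)
  show "\<forall>u\<in>X. ?f u \<in> A u"
    using assms by auto
qed

lemma Hall_condition_Diff_tight:
  assumes fin: "finite X" "\<forall>u\<in>X. finite (A u)"
    and Hall: "\<forall>T\<subseteq>X. card T \<le> card (\<Union>(A ` T))"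
    and S: "S \<subseteq> X" "card (\<Union>(A ` S)) = card S"
  shows "\<forall>T\<subseteq>X - S. card T \<le> card (\<Union>u\<in>T. A u - \<Union>(A ` S))"
proof (intro allI impI)
  fix T assume T: "T \<subseteq> X - S"
  let ?U = "\<Union>(A ` S)" and ?B = "\<Union>u\<in>T. A u - \<Union>(A ` S)"
  have "finite T" "finite S"
    using T S fin(1) by (auto intro: finite_subset)
  have "finite ?U" "finite ?B"
    using T S \<open>finite T\<close> \<open>finite S\<close> fin(2) by (auto intro!: finite_UN_I)
  have "card T + card S = card (T \<union> S)"
    using \<open>finite T\<close> \<open>finite S\<close> T by (subst card_Un_disjoint) auto
  also have "\<dots> \<le> card (\<Union>(A ` (T \<union> S)))"
    using T S by (intro Hall[rule_format]) auto
  also have "\<Union>(A ` (T \<union> S)) = ?B \<union> ?U"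
    by auto
  also have "card (?B \<union> ?U) = card ?B + card S"
    using \<open>finite ?U\<close> \<open>finite ?B\<close> S(2) by (subst card_Un_disjoint) auto
  finally show "card T \<le> card ?B"
    by simp
qed

lemma Hall_condition_Diff_point:
  assumes strict: "\<forall>T. T \<subseteq> X \<and> T \<noteq> {} \<and> T \<noteq> X \<longrightarrow> card T < card (\<Union>(A ` T))"
    and "x \<in> X"
  shows "\<forall>T\<subseteq>X - {x}. card T \<le> card (\<Union>u\<in>T. A u - {y})"
proof (intro allI impI)
  fix T assume T: "T \<subseteq> X - {x}"
  show "card T \<le> card (\<Union>u\<in>T. A u - {y})"
  proof (cases "T = {}")
    case False
    then have "card T < card (\<Union>(A ` T))"
      using strict T \<open>x \<in> X\<close> by blast
    moreover have "card (\<Union>(A ` T)) - 1 \<le> card (\<Union>(A ` T) - {y})"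
      by (metis card_Diff_singleton_if diff_le_self order_refl)
    ultimately have "card T \<le> card (\<Union>(A ` T) - {y})"
      by linarith
    moreover have "(\<Union>u\<in>T. A u - {y}) = \<Union>(A ` T) - {y}"
      by blast
    ultimately show ?thesis
      by simp
  qed simp
qed

theorem Hall_marriage:
  fixes A :: "'a \<Rightarrow> 'b set"
  assumes "finite X" "\<forall>u\<in>X. finite (A u)" "\<forall>S\<subseteq>X. card S \<le> card (\<Union>(A ` S))"
  shows "\<exists>f. inj_on f X \<and> (\<forall>u\<in>X. f u \<in> A u)"
  using assms
proof (induction "card X" arbitrary: X A rule: less_induct)
  case less
  note fin = less.prems(1,2) and Hall = less.prems(3)
  consider "X = {}"
    | (tight) S where "S \<subseteq> X" "S \<noteq> {}" "S \<noteq> X" "card (\<Union>(A ` S)) \<le> card S"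
    | (strict) "X \<noteq> {}" "\<forall>T. T \<subseteq> X \<and> T \<noteq> {} \<and> T \<noteq> X \<longrightarrow> card T < card (\<Union>(A ` T))"
    by (meson not_le)
  then show ?case
  proof cases
    case tight
    let ?U = "\<Union>(A ` S)"
    have tight_eq: "card ?U = card S"
      using tight Hall by (meson le_antisym)
    have "card S < card X"
      using tight fin by (meson psubsetI psubset_card_mono)
    have "0 < card S"
      using tight fin by (simp add: card_gt_0_iff finite_subset)
    then have "card (X - S) < card X"
      using tight fin \<open>card S < card X\<close> by (simp add: card_Diff_subset finite_subset)
    have "finite S" "\<forall>u\<in>S. finite (A u)" "\<forall>T\<subseteq>S. card T \<le> card (\<Union>(A ` T))"
      using tight(1) fin Hall by (auto intro: finite_subset)
    with \<open>card S < card X\<close> obtain g where "inj_on g S" "\<forall>u\<in>S. g u \<in> A u"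
      using less.hyps by blast
    moreover obtain h where "inj_on h (X - S)" "\<forall>u\<in>X - S. h u \<in> A u - ?U"
      using less.hyps[of "X - S" "\<lambda>u. A u - ?U"] \<open>card (X - S) < card X\<close> fin
        Hall_condition_Diff_tight[OF fin Hall tight(1) tight_eq] by blast
    ultimately show ?thesis
      by (intro injective_choice_glue[where U = ?U]) auto
  next
    case strict
    then obtain x where x: "x \<in> X" by blast
    then have "card {x} \<le> card (\<Union>(A ` {x}))"
      using Hall by blast
    then obtain y where y: "y \<in> A x"
      by fastforce
    have "card (X - {x}) < card X"
      using fin(1) x by (rule card_Diff1_less)
    then obtain h where "inj_on h (X - {x})" "\<forall>u\<in>X - {x}. h u \<in> A u - {y}"
      using less.hyps[of "X - {x}" "\<lambda>u. A u - {y}"] fin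
        Hall_condition_Diff_point[OF strict(2) x] by blast
    then show ?thesis
      by (intro injective_choice_glue[where S = "{x}" and g = "\<lambda>_. y" and U = "{y}"]) (use x y in auto)
  qed auto
qed

lemma rand_subset_prob_nonneg:
  assumes "0 \<le> q" "q \<le> 1"
  shows "0 \<le> rand_subset_prob V q P"
  unfolding rand_subset_prob_def using assms by (intro sum_nonneg) auto

lemma rand_subset_prob_mono:
  assumes "0 \<le> q" "q \<le> 1" "\<forall>Y\<subseteq>V. P Y \<longrightarrow> Q Y"
  shows "rand_subset_prob V q P \<le> rand_subset_prob V q Q"
  unfolding rand_subset_prob_def using assms by (intro sum_mono) auto

lemma rand_subset_prob_Bex_le:
  assumes "0 \<le> q" "q \<le> 1" "finite I"
  shows "rand_subset_prob V q (\<lambda>Y. \<exists>i\<in>I. P i Y) \<le> (\<Sum>i\<in>I. rand_subset_prob V q (P i))"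
proof -
  define w :: "nat set \<Rightarrow> real" where "w Y = q ^ card Y * (1 - q) ^ (card V - card Y)" for Y
  have w_nonneg: "0 \<le> w Y" for Y
    unfolding w_def using assms by simp
  have "rand_subset_prob V q (\<lambda>Y. \<exists>i\<in>I. P i Y) = (\<Sum>Y\<in>Pow V. if \<exists>i\<in>I. P i Y then w Y else 0)"
    unfolding rand_subset_prob_def w_def by simp
  also have "\<dots> \<le> (\<Sum>Y\<in>Pow V. \<Sum>i\<in>I. if P i Y then w Y else 0)"
  proof (intro sum_mono)
    fix Y
    show "(if \<exists>i\<in>I. P i Y then w Y else 0) \<le> (\<Sum>i\<in>I. if P i Y then w Y else 0)"
    proof (cases "\<exists>i\<in>I. P i Y")
      case True
      then obtain i where "i \<in> I" "P i Y" by blast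
      then have "w Y \<le> (\<Sum>i\<in>I. if P i Y then w Y else 0)"
        using member_le_sum[of i I "\<lambda>i. if P i Y then w Y else 0"] w_nonneg assms(3) by simp
      then show ?thesis
        using True by simp
    qed (simp add: sum_nonneg w_nonneg)
  qed
  also have "\<dots> = (\<Sum>i\<in>I. rand_subset_prob V q (P i))"
    unfolding rand_subset_prob_def w_def by (rule sum.swap)
  finally show ?thesis .
qed

lemma sum_Pow_power_card:
  fixes x y :: "'a :: comm_semiring_1"
  assumes "finite B"
  shows "(\<Sum>Z\<in>Pow B. x ^ card Z * y ^ (card B - card Z)) = (x + y) ^ card B"
proof -
  have "(x + y) ^ card B = (\<Sum>Z\<in>Pow B. (\<Prod>b\<in>Z. x) * (\<Prod>b\<in>B - Z. y))"
    using prod_add[OF assms, of "\<lambda>_. x" "\<lambda>_. y"] by simp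
  also have "\<dots> = (\<Sum>Z\<in>Pow B. x ^ card Z * y ^ (card B - card Z))"
    using assms by (intro sum.cong refl) (auto simp: card_Diff_subset finite_subset)
  finally show ?thesis ..
qed

lemma rand_subset_prob_Int_eq:
  assumes "finite V" "A \<subseteq> V" "T \<subseteq> A"
  shows "rand_subset_prob V q (\<lambda>Y. Y \<inter> A = T) = q ^ card T * (1 - q) ^ (card A - card T)"
proof -
  define B where "B = V - A"
  define w :: "nat set \<Rightarrow> real" where "w Y = q ^ card Y * (1 - q) ^ (card V - card Y)" for Y
  have fin: "finite A" "finite B" "finite T"
    using assms by (auto simp: B_def intro: finite_subset)
  have inj: "inj_on ((\<union>) T) (Pow B)"
    unfolding B_def inj_on_def using assms by blast
  have card_V: "card V = card A + card B"
    unfolding B_def using card_Diff_subset[OF fin(1) assms(2)] card_mono[OF assms(1,2)] by simp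
  have "rand_subset_prob V q (\<lambda>Y. Y \<inter> A = T) = (\<Sum>Y\<in>{Y\<in>Pow V. Y \<inter> A = T}. w Y)"
    unfolding rand_subset_prob_def w_def using assms(1) by (simp add: sum.inter_filter[symmetric])
  also have "{Y\<in>Pow V. Y \<inter> A = T} = (\<union>) T ` Pow B"
  proof (intro equalityI subsetI)
    fix Y assume "Y \<in> {Y\<in>Pow V. Y \<inter> A = T}"
    then have "Y = T \<union> (Y - A)" "Y - A \<in> Pow B"
      unfolding B_def by auto
    then show "Y \<in> (\<union>) T ` Pow B" by blast
  next
    fix Y assume "Y \<in> (\<union>) T ` Pow B"
    then show "Y \<in> {Y\<in>Pow V. Y \<inter> A = T}"
      using assms unfolding B_def by auto
  qed
  also have "(\<Sum>Y\<in>(\<union>) T ` Pow B. w Y) = (\<Sum>Z\<in>Pow B. w (T \<union> Z))"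
    using inj by (rule sum.reindex[unfolded comp_def])
  also have "\<dots> = (\<Sum>Z\<in>Pow B. q ^ card T * (1 - q) ^ (card A - card T) *
                     (q ^ card Z * (1 - q) ^ (card B - card Z)))"
  proof (intro sum.cong refl)
    fix Z assume Z: "Z \<in> Pow B"
    have "finite Z" "T \<inter> Z = {}"
      using Z fin(2) assms unfolding B_def by (auto intro: finite_subset)
    then have "card (T \<union> Z) = card T + card Z"
      using fin(3) by (simp add: card_Un_disjoint)
    moreover have "card T \<le> card A" "card Z \<le> card B"
      using Z fin assms by (auto intro: card_mono)
    ultimately have "card V - card (T \<union> Z) = (card A - card T) + (card B - card Z)"
      using card_V by simp
    then show "w (T \<union> Z) = q ^ card T * (1 - q) ^ (card A - card T) *
                 (q ^ card Z * (1 - q) ^ (card B - card Z))"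
      using \<open>card (T \<union> Z) = card T + card Z\<close> unfolding w_def by (simp add: power_add algebra_simps)
  qed
  also have "\<dots> = q ^ card T * (1 - q) ^ (card A - card T)"
    by (simp add: sum_distrib_left[symmetric] sum_Pow_power_card[OF fin(2)])
  finally show ?thesis .
qed

lemma binomial_lower_tail_le:
  fixes q :: real
  assumes "0 \<le> q" "q \<le> 1" "finite A"
  shows "(\<Sum>T\<in>{T\<in>Pow A. card T < s}. q ^ card T * (1 - q) ^ (card A - card T))
           \<le> exp (real s) * exp (- q * real (card A) / 2)"
proof -
  define e where "e = exp (1::real)"
  have e: "2 \<le> e" "e ^ s = exp (real s)"
    unfolding e_def using exp_ge_add_one_self[of 1] by (auto simp: exp_of_nat_mult[symmetric])
  \<comment> \<open>Exponential moment: weight each term by e^(s - |T|) \<ge> 1, then complete the sum.\<close>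
  have "(\<Sum>T\<in>{T\<in>Pow A. card T < s}. q ^ card T * (1 - q) ^ (card A - card T))
          \<le> (\<Sum>T\<in>{T\<in>Pow A. card T < s}. e ^ s * ((q / e) ^ card T * (1 - q) ^ (card A - card T)))"
  proof (intro sum_mono)
    fix T assume "T \<in> {T\<in>Pow A. card T < s}"
    then have "e ^ card T \<le> e ^ s"
      using e by (intro power_increasing) auto
    then have "q ^ card T \<le> e ^ s * (q / e) ^ card T"
      using e assms by (simp add: power_divide field_simps mult_right_mono)
    then show "q ^ card T * (1 - q) ^ (card A - card T)
                 \<le> e ^ s * ((q / e) ^ card T * (1 - q) ^ (card A - card T))"
      using assms by (simp add: mult.assoc[symmetric] mult_right_mono)
  qed
  also have "\<dots> \<le> (\<Sum>T\<in>Pow A. e ^ s * ((q / e) ^ card T * (1 - q) ^ (card A - card T)))"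
    using assms e by (intro sum_mono2) auto
  also have "\<dots> = e ^ s * (q / e + (1 - q)) ^ card A"
    by (simp add: sum_distrib_left[symmetric] sum_Pow_power_card[OF assms(3)])
  also have "(q / e + (1 - q)) ^ card A \<le> exp (- q / 2) ^ card A"
  proof (intro power_mono)
    have "q / e \<le> q / 2"
      using e assms by (intro divide_left_mono) auto
    then show "q / e + (1 - q) \<le> exp (- q / 2)"
      using exp_ge_add_one_self[of "- q / 2"] by linarith
  qed (use assms e in auto)
  finally show ?thesis
    using e by (simp add: exp_of_nat_mult[symmetric] mult_left_mono mult.commute)
qed

lemma rand_subset_prob_card_Int_less:
  assumes "0 \<le> q" "q \<le> 1" "finite V" "A \<subseteq> V"
  shows "rand_subset_prob V q (\<lambda>Y. card (Y \<inter> A) < s) \<le> exp (real s) * exp (- q * real (card A) / 2)"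
proof -
  let ?I = "{T\<in>Pow A. card T < s}"
  have "finite A"
    using assms finite_subset by blast
  have "rand_subset_prob V q (\<lambda>Y. card (Y \<inter> A) < s) \<le> rand_subset_prob V q (\<lambda>Y. \<exists>T\<in>?I. Y \<inter> A = T)"
    using assms by (intro rand_subset_prob_mono) auto
  also have "\<dots> \<le> (\<Sum>T\<in>?I. rand_subset_prob V q (\<lambda>Y. Y \<inter> A = T))"
    using assms \<open>finite A\<close> by (intro rand_subset_prob_Bex_le) auto
  also have "\<dots> = (\<Sum>T\<in>?I. q ^ card T * (1 - q) ^ (card A - card T))"
    using assms by (intro sum.cong refl rand_subset_prob_Int_eq) auto
  also have "\<dots> \<le> exp (real s) * exp (- q * real (card A) / 2)"
    using assms \<open>finite A\<close> by (intro binomial_lower_tail_le)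
  finally show ?thesis .
qed

lemma not_assignable_imp_Hall_violation:
  assumes "finite X" "\<not> assignable n E r X Y"
  shows "\<exists>S\<in>Pow X - {{}}. card (Y \<inter> (\<Union>v\<in>S. ball_set n E v r)) < card S"
proof (rule ccontr)
  assume no_violation: "\<not> ?thesis"
  have "\<forall>S\<subseteq>X. card S \<le> card (\<Union>u\<in>S. ball_set n E u r \<inter> Y)"
  proof (intro allI impI)
    fix S assume "S \<subseteq> X"
    show "card S \<le> card (\<Union>u\<in>S. ball_set n E u r \<inter> Y)"
    proof (cases "S = {}")
      case False
      then have "card S \<le> card (Y \<inter> (\<Union>v\<in>S. ball_set n E v r))"
        using no_violation \<open>S \<subseteq> X\<close> by (meson DiffI PowI not_le singletonD)
      also have "Y \<inter> (\<Union>v\<in>S. ball_set n E v r) = (\<Union>u\<in>S. ball_set n E u r \<inter> Y)"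
        by blast
      finally show ?thesis .
    qed simp
  qed
  moreover have "\<forall>u\<in>X. finite (ball_set n E u r \<inter> Y)"
    by (simp add: ball_set_def)
  ultimately obtain f where "inj_on f X" "\<forall>u\<in>X. f u \<in> ball_set n E u r \<inter> Y"
    using Hall_marriage[OF assms(1), of "\<lambda>u. ball_set n E u r \<inter> Y"] by blast
  then show False
    using assms(2) unfolding assignable_def by blast
qed

lemma exp_minus_mult_ln:
  fixes m :: real and k :: nat
  assumes "0 < m"
  shows "exp (real s - real k * (real s * ln m)) = (exp 1 / m ^ k) ^ s"
proof -
  have "exp (real s - k * (real s * ln m)) = exp (1 - ln (m ^ k)) ^ s"
    using assms by (simp add: exp_of_nat_mult[symmetric] ln_realpow algebra_simps)
  also have "exp (1 - ln (m ^ k)) = exp 1 / m ^ k"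
    using assms by (simp add: exp_diff)
  finally show ?thesis .
qed

lemma expansion_tail_bound:
  fixes m N D c C :: real and s :: nat
  assumes "1 \<le> m" "0 < c" "12 \<le> c * C" "sqrt m * ln m \<le> D" "c * min (real s * D) m \<le> N"
  shows "exp (real s) * exp (- (C / sqrt m) * N / 2)
           \<le> (exp 1 / m ^ 6) ^ s + exp (real s - 6 * sqrt m)"
proof -
  have "sqrt m > 0" "ln m \<ge> 0"
    using assms(1) by auto
  have "min (real s * ln m) (sqrt m) \<le> min (real s * D) m / sqrt m"
  proof -
    have "real s * (sqrt m * ln m) \<le> real s * D"
      using assms(4) by (intro mult_left_mono) auto
    then have "real s * ln m \<le> real s * D / sqrt m"
      using \<open>sqrt m > 0\<close> by (simp add: field_simps)
    moreover have "m / sqrt m = sqrt m"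
      using assms(1) by (simp add: real_div_sqrt)
    ultimately show ?thesis
      using \<open>sqrt m > 0\<close> by (auto simp: min_def divide_right_mono)
  qed
  also have "\<dots> \<le> N / (c * sqrt m)"
    using assms(5) assms(2) \<open>sqrt m > 0\<close> by (simp add: field_simps)
  finally have "6 * min (real s * ln m) (sqrt m) \<le> (c * C / 2) * (N / (c * sqrt m))"
    using assms(3) \<open>ln m \<ge> 0\<close> \<open>sqrt m > 0\<close> by (intro mult_mono) auto
  also have "\<dots> = (C / sqrt m) * N / 2"
    using assms(2) by (simp add: field_simps)
  finally have "exp (real s) * exp (- (C / sqrt m) * N / 2)
                  \<le> exp (real s - 6 * min (real s * ln m) (sqrt m))"
    by (simp add: exp_add[symmetric])
  also have "\<dots> \<le> exp (real s - 6 * (real s * ln m)) + exp (real s - 6 * sqrt m)"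
    by (auto simp: min_def add_increasing add_increasing2)
  also have "exp (real s - 6 * (real s * ln m)) = (exp 1 / m ^ 6) ^ s"
    using assms(1) exp_minus_mult_ln[of m s 6] by simp
  finally show ?thesis .
qed

lemma sum_nonempty_subsets_power_le:
  fixes a :: real
  assumes "finite X" "0 \<le> a"
  shows "(\<Sum>S\<in>Pow X - {{}}. a ^ card S) \<le> exp (a * real (card X)) - 1"
proof -
  have "(\<Sum>S\<in>Pow X - {{}}. a ^ card S) = (\<Sum>S\<in>Pow X. a ^ card S * 1 ^ (card X - card S)) - 1"
    using assms(1) by (simp add: sum_diff1)
  also have "\<dots> = (a + 1) ^ card X - 1"
    using assms(1) by (simp only: sum_Pow_power_card)
  also have "(a + 1) ^ card X \<le> exp a ^ card X"
    using assms(2) exp_ge_add_one_self[of a] by (intro power_mono) (auto simp: add.commute)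
  finally show ?thesis
    by (simp add: exp_of_nat_mult[symmetric] mult.commute)
qed

lemma sum_nonempty_subsets_exp_le:
  assumes "finite X"
  shows "(\<Sum>S\<in>Pow X - {{}}. exp (real (card S) - t)) \<le> exp (2 * real (card X) - t)"
proof -
  have "(\<Sum>S\<in>Pow X - {{}}. exp (real (card S) - t)) \<le> (\<Sum>S\<in>Pow X - {{}}. exp (real (card X) - t))"
    using assms by (intro sum_mono) (simp add: card_mono)
  also have "\<dots> \<le> (\<Sum>S\<in>Pow X. exp (real (card X) - t))"
    using assms by (intro sum_mono2) auto
  also have "\<dots> = 2 ^ card X * exp (real (card X) - t)"
    using assms by (simp add: card_Pow)
  also have "\<dots> \<le> exp 1 ^ card X * exp (real (card X) - t)"
    using exp_ge_add_one_self[of 1] by (intro mult_right_mono power_mono) auto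
  also have "\<dots> = exp (2 * real (card X) - t)"
    by (simp add: exp_of_nat_mult[symmetric] exp_add[symmetric])
  finally show ?thesis .
qed

lemma rand_subset_prob_not_assignable_le:
  fixes c C D :: real
  assumes "1 \<le> n" "C / sqrt (real n) \<le> 1" "0 < c" "12 / c \<le> C"
    and X: "X \<subseteq> {..<n}" "real (card X) \<le> 2 * sqrt (real n)"
    and D: "sqrt (real n) * ln (real n) \<le> D"
    and expansion: "\<forall>S\<subseteq>X. c * min (real (card S) * D) (real n)
                       \<le> real (card (\<Union>v\<in>S. ball_set n E v r))"
  shows "rand_subset_prob {..<n} (C / sqrt (real n)) (\<lambda>Y. \<not> assignable n E r X Y)
           \<le> (exp (2 * exp 1 * sqrt (real n) / real n ^ 6) - 1) + exp (- 2 * sqrt (real n))"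
proof -
  let ?q = "C / sqrt (real n)" and ?N = "\<lambda>S. \<Union>v\<in>S. ball_set n E v r" and ?I = "Pow X - {{}}"
  let ?a = "exp 1 / real n ^ 6"
  have C: "0 \<le> C" "12 \<le> c * C"
    using assms(3,4) by (meson order_trans less_imp_le divide_nonneg_pos zero_le_numeral,
        simp add: pos_divide_le_eq mult.commute)
  have q: "0 \<le> ?q" "?q \<le> 1"
    using assms(2) C by auto
  have "finite X"
    using X(1) finite_subset by blast
  have "rand_subset_prob {..<n} ?q (\<lambda>Y. \<not> assignable n E r X Y)
          \<le> rand_subset_prob {..<n} ?q (\<lambda>Y. \<exists>S\<in>?I. card (Y \<inter> ?N S) < card S)"
    using q \<open>finite X\<close> not_assignable_imp_Hall_violation by (intro rand_subset_prob_mono) auto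
  also have "\<dots> \<le> (\<Sum>S\<in>?I. rand_subset_prob {..<n} ?q (\<lambda>Y. card (Y \<inter> ?N S) < card S))"
    using q \<open>finite X\<close> by (intro rand_subset_prob_Bex_le) auto
  also have "\<dots> \<le> (\<Sum>S\<in>?I. exp (real (card S)) * exp (- ?q * real (card (?N S)) / 2))"
    using q by (intro sum_mono rand_subset_prob_card_Int_less) (auto simp: ball_set_def)
  also have "\<dots> \<le> (\<Sum>S\<in>?I. ?a ^ card S + exp (real (card S) - 6 * sqrt (real n)))"
    using assms(1,3) C D expansion by (intro sum_mono expansion_tail_bound) auto
  also have "\<dots> \<le> (exp (?a * real (card X)) - 1) + exp (2 * real (card X) - 6 * sqrt (real n))"
    unfolding sum.distrib using \<open>finite X\<close>
    by (intro add_mono sum_nonempty_subsets_power_le sum_nonempty_subsets_exp_le) auto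
  also have "\<dots> \<le> (exp (2 * exp 1 * sqrt (real n) / real n ^ 6) - 1) + exp (- 2 * sqrt (real n))"
  proof -
    have "?a * real (card X) \<le> ?a * (2 * sqrt (real n))"
      using X(2) by (intro mult_left_mono) auto
    then show ?thesis
      using X(2) by (intro add_mono) (auto simp: mult_ac)
  qed
  finally show ?thesis .
qed

theorem lemma2p2:
  fixes E :: "nat \<Rightarrow> nat \<Rightarrow> nat \<Rightarrow> bool"
    and p d :: "nat \<Rightarrow> real"
  assumes graph: "\<And>n. graph_on n (E n)"
    and d_def: "\<And>n. d n = p n * (real n - 1)"
    and d_large: "\<forall>\<^sub>F n in sequentially. d n \<ge> ln (real n) ^ 3"
    and expand: "\<exists>c>0. \<forall>n S r. S \<subseteq> {..<n} \<longrightarrow>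
        real (card (\<Union>v\<in>S. ball_set n (E n) v r)) \<ge> c * min (real (card S) * d n ^ r) (real n)"
    and expand_small: "\<exists>\<epsilon>. \<epsilon> \<longlonglongrightarrow> 0 \<and> (\<forall>n S r. S \<subseteq> {..<n} \<and>
        real (card S) * d n ^ r < real n / ln (real n) \<longrightarrow>
        \<bar>real (card (\<Union>v\<in>S. ball_set n (E n) v r)) - real (card S) * d n ^ r\<bar>
          \<le> \<epsilon> n * (real (card S) * d n ^ r))"
    and disjoint_fam: "\<exists>\<epsilon>. \<epsilon> \<longlonglongrightarrow> 0 \<and> (\<forall>n v r. v < n \<and>
        sqrt (real n) < d n ^ (r + 1) \<and> d n ^ (r + 1) \<le> sqrt (real n) * ln (real n) \<longrightarrow>
        (\<exists>W :: nat \<Rightarrow> nat set.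
           (\<forall>u\<in>sphere_set n (E n) v r. W u \<subseteq> sphere_set n (E n) u (r + 1)
              \<and> \<bar>real (card (W u)) - d n ^ (r + 1)\<bar> \<le> \<epsilon> n * d n ^ (r + 1)) \<and>
           (\<forall>u\<in>sphere_set n (E n) v r. \<forall>u'\<in>sphere_set n (E n) v r.
              u \<noteq> u' \<longrightarrow> W u \<inter> W u' = {})))"
  shows "\<exists>C0. \<forall>C\<ge>C0. \<forall>(X :: nat \<Rightarrow> nat set) (r :: nat \<Rightarrow> nat).
           (\<forall>\<^sub>F n in sequentially. X n \<subseteq> {..<n} \<and> real (card (X n)) \<le> 2 * sqrt (real n)
                 \<and> d n ^ r n \<ge> sqrt (real n) * ln (real n)) \<longrightarrow>
           (\<lambda>n. rand_subset_prob {..<n} (C / sqrt (real n))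
                   (\<lambda>Y. \<not> assignable n (E n) (r n) (X n) Y))
             \<in> o(\<lambda>n. 1 / real n ^ 2)"
proof -
  obtain c where "c > 0" and expansion: "\<forall>n S r. S \<subseteq> {..<n} \<longrightarrow>
      c * min (real (card S) * d n ^ r) (real n) \<le> real (card (\<Union>v\<in>S. ball_set n (E n) v r))"
    using expand by blast
  define bound :: "nat \<Rightarrow> real" where
    "bound n = (exp (2 * exp 1 * sqrt (real n) / real n ^ 6) - 1) + exp (- 2 * sqrt (real n))" for n
  have bound_small: "bound \<in> o(\<lambda>n. 1 / real n ^ 2)"
    unfolding bound_def by real_asymp
  show ?thesis
  proof (intro exI[of _ "12 / c"] allI impI)
    fix C :: real and X :: "nat \<Rightarrow> nat set" and r :: "nat \<Rightarrow> nat"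
    assume C_large: "12 / c \<le> C"
      and hyps: "\<forall>\<^sub>F n in sequentially. X n \<subseteq> {..<n} \<and> real (card (X n)) \<le> 2 * sqrt (real n)
                   \<and> d n ^ r n \<ge> sqrt (real n) * ln (real n)"
    have "0 \<le> C"
      using \<open>c > 0\<close> C_large by (meson order_trans less_imp_le divide_nonneg_pos zero_le_numeral)
    let ?fail = "\<lambda>n. rand_subset_prob {..<n} (C / sqrt (real n))
                   (\<lambda>Y. \<not> assignable n (E n) (r n) (X n) Y)"
    have "\<forall>\<^sub>F n in sequentially. C / sqrt (real n) \<le> 1"
      by real_asymp
    with hyps eventually_ge_at_top[of 1]
    have "\<forall>\<^sub>F n in sequentially. norm (?fail n) \<le> norm (bound n)"
    proof eventually_elim
      case (elim n)
      then show ?case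
        using \<open>c > 0\<close> C_large \<open>0 \<le> C\<close> expansion rand_subset_prob_nonneg[of "C / sqrt (real n)"]
          rand_subset_prob_not_assignable_le[of n C c "X n" "d n ^ r n" "E n" "r n"]
        unfolding bound_def by force
    qed
    then have "?fail \<in> O(bound)"
      by (rule landau_o.big_mono)
    then show "?fail \<in> o(\<lambda>n. 1 / real n ^ 2)"
      using bound_small by (rule landau_o.big_small_trans)
  qed
qed

end
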